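(* If a queuing regime $R=(\mathcal{X},\alpha,\xi,(\rho_i)_i,\pi)$ is universally optimal, then there exists a non-idle state $x$ at which preemption occurs, i.e., $\pi(x)=1$.
   Context: Model: an M/M/1 queue with a single server; customers arrive according to a Poisson process with rate $\lambda>0$ and are served at exponential rate $\mu>0$. Each customer incurs cost at rate $c>0$ while in the system and receives reward $r>0$ upon service completion; a customer who reneges gets no reward. Queuing regime: a tuple $(\mathcal{X},\alpha,\xi,(\rho_i)_i,\pi)$ where $\mathcal{X}=\mathcal{X}_0\uplus\mathcal{X}_1\uplus\cdots$ is a set of states partitioned by the number of customers in the system ($\mathcal{X}_0$ is a singleton, the idle state), and $n(x)=n$ for $x\in\mathcal{X}_n$. Customers present are ranked in a queue: position $1$ is being served (work-conserving) and position $n$ is last. If at state $x\in\mathcal{X}_n$ a customer arrives, the arriving customer is placed at position $\pi(x)\in\{1,\dots,n+1\}$ and the state becomes $\alpha(x)\in\mathcal{X}_{n+1}$. If at $x\in\mathcal{X}_n$, $n\ge1$, service is completed, the state becomes $\xi(x)\in\mathcal{X}_{n-1}$. If at $x\in\mathcal{X}_n$ the customer at position $i$ reneges, the state becomes $\rho_i(x)\in\mathcal{X}_{n-1}$. Events do not change the relative order of remaining customers, and $\rho_i(\rho_j(x))=\rho_{j-1}(\rho_i(x))$ for $i<j$, so simultaneous reneging of a set of positions is well defined. Strategies and equilibrium: a Markov strategy profile is a function $\sigma$ on non-idle states with $\sigma(x)\subseteq\{1,\dots,n(x)\}$, the positions of customers who renege simultaneously when the system reaches $x$. It is a Markov perfect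 equilibrium if for every state $x$ it is a Nash equilibrium of the game starting at $x$ in which each customer decides whether to stay or renege. Social optimum: the designer maximizes long-run average welfare (reward $r$ per service minus cost $c$ per unit time per customer present); the optimal policy keeps at most $n^*(\lambda,\mu,c,r)$ customers. A profile $\sigma$ induces the socially optimal behavior if $|\sigma(x)|=\max(n(x)-n^*,0)$ for all non-idle $x$. A regime is universally optimal if for every parameters $(\lambda,\mu,c,r)$ the game admits a Markov perfect equilibrium inducing the socially optimal behavior. *)

theory Defs
  imports Complex_Main "HOL-Library.Extended_Nonnegative_Real" "HOL-Library.Extended_Real"
begin

(* States are the elements of the type 'x; nn x is the number
   of customers in state x.  alpha = arrival, xi = service completion,
   rho i = reneging of the customer at position i, pos = position of an arriving
   customer.  Positions are 1-based. *)
definition queuing_regime ::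
  "('x \<Rightarrow> nat) \<Rightarrow> ('x \<Rightarrow> 'x) \<Rightarrow> ('x \<Rightarrow> 'x) \<Rightarrow> (nat \<Rightarrow> 'x \<Rightarrow> 'x) \<Rightarrow> ('x \<Rightarrow> nat) \<Rightarrow> bool" where
  "queuing_regime nn alpha xi rho pos \<longleftrightarrow>
     (\<exists>!x. nn x = 0) \<and>
     (\<forall>x. nn (alpha x) = Suc (nn x) \<and> 1 \<le> pos x \<and> pos x \<le> Suc (nn x)) \<and>
     (\<forall>x. 1 \<le> nn x \<longrightarrow> nn (xi x) = nn x - 1) \<and>
     (\<forall>x i. 1 \<le> i \<and> i \<le> nn x \<longrightarrow> nn (rho i x) = nn x - 1) \<and>
     (\<forall>x i j. 1 \<le> i \<and> i < j \<and> j \<le> nn x \<longrightarrow> rho i (rho j x) = rho (j - 1) (rho i x))"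

(* simultaneous reneging of the set S of positions: remove from the highest position down *)
definition rho_set :: "(nat \<Rightarrow> 'x \<Rightarrow> 'x) \<Rightarrow> nat set \<Rightarrow> 'x \<Rightarrow> 'x" where
  "rho_set rho S x = fold rho (rev (sorted_list_of_set S)) x"

definition new_pos :: "nat set \<Rightarrow> nat \<Rightarrow> nat" where
  "new_pos S i = i - card {k \<in> S. k < i}"

definition pos_after_arrival :: "('x \<Rightarrow> nat) \<Rightarrow> 'x \<Rightarrow> nat \<Rightarrow> nat" where
  "pos_after_arrival pos x i = (if pos x \<le> i then Suc i else i)"

(* Markov strategy profile: sigma x = positions reneging when x is reached *)
definition markov_strategy :: "('x \<Rightarrow> nat) \<Rightarrow> ('x \<Rightarrow> nat set) \<Rightarrow> bool" where
  "markov_strategy nn \<sigma> \<longleftrightarrow> (\<forall>x. \<sigma> x \<subseteq> {1..nn x})"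

(* configuration of a tagged customer after all (cascading) reneging has been resolved *)
datatype 'x config = Flow 'x nat | Gone

fun resolve_fuel :: "nat \<Rightarrow> ('x \<Rightarrow> nat set) \<Rightarrow> (nat \<Rightarrow> 'x \<Rightarrow> 'x) \<Rightarrow> 'x \<Rightarrow> nat \<Rightarrow> 'x config" where
  "resolve_fuel 0 \<sigma> rho z k = Gone"
| "resolve_fuel (Suc f) \<sigma> rho z k =
     (if k \<in> \<sigma> z then Gone
      else if \<sigma> z = {} then Flow z k
      else resolve_fuel f \<sigma> rho (rho_set rho (\<sigma> z) z) (new_pos (\<sigma> z) k))"

(* the system reaches state z with the tagged customer at position k *)
definition resolve :: "('x \<Rightarrow> nat) \<Rightarrow> ('x \<Rightarrow> nat set) \<Rightarrow> (nat \<Rightarrow> 'x \<Rightarrow> 'x) \<Rightarrow> 'x \<Rightarrow> nat \<Rightarrow> 'x config" where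
  "resolve nn \<sigma> rho z k = resolve_fuel (Suc (nn z)) \<sigma> rho z k"

definition cval :: "('x \<Rightarrow> nat \<Rightarrow> ennreal) \<Rightarrow> 'x config \<Rightarrow> ennreal" where
  "cval f c = (case c of Flow y j \<Rightarrow> f y j | Gone \<Rightarrow> 0)"

(* Bellman operators of the embedded jump chain; their least fixed points are the
   probability of eventually being served and the expected sojourn time *)
definition served_op ::
  "real \<Rightarrow> real \<Rightarrow> ('x \<Rightarrow> nat) \<Rightarrow> ('x \<Rightarrow> 'x) \<Rightarrow> ('x \<Rightarrow> 'x) \<Rightarrow> (nat \<Rightarrow> 'x \<Rightarrow> 'x) \<Rightarrow> ('x \<Rightarrow> nat)
   \<Rightarrow> ('x \<Rightarrow> nat set) \<Rightarrow> ('x \<Rightarrow> nat \<Rightarrow> ennreal) \<Rightarrow> ('x \<Rightarrow> nat \<Rightarrow> ennreal)" where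
  "served_op la mu nn alpha xi rho pos \<sigma> f = (\<lambda>x i.
     ennreal (la / (la + mu)) * cval f (resolve nn \<sigma> rho (alpha x) (pos_after_arrival pos x i))
   + ennreal (mu / (la + mu)) * (if i = 1 then 1 else cval f (resolve nn \<sigma> rho (xi x) (i - 1))))"

definition time_op ::
  "real \<Rightarrow> real \<Rightarrow> ('x \<Rightarrow> nat) \<Rightarrow> ('x \<Rightarrow> 'x) \<Rightarrow> ('x \<Rightarrow> 'x) \<Rightarrow> (nat \<Rightarrow> 'x \<Rightarrow> 'x) \<Rightarrow> ('x \<Rightarrow> nat)
   \<Rightarrow> ('x \<Rightarrow> nat set) \<Rightarrow> ('x \<Rightarrow> nat \<Rightarrow> ennreal) \<Rightarrow> ('x \<Rightarrow> nat \<Rightarrow> ennreal)" where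
  "time_op la mu nn alpha xi rho pos \<sigma> f = (\<lambda>x i.
     ennreal (1 / (la + mu))
   + ennreal (la / (la + mu)) * cval f (resolve nn \<sigma> rho (alpha x) (pos_after_arrival pos x i))
   + ennreal (mu / (la + mu)) * (if i = 1 then 0 else cval f (resolve nn \<sigma> rho (xi x) (i - 1))))"

(* expected payoff of a customer at position i of state x, after reneging at x
   has been resolved, when everybody follows sigma from then on *)
definition flow_payoff ::
  "real \<Rightarrow> real \<Rightarrow> real \<Rightarrow> real \<Rightarrow> ('x \<Rightarrow> nat) \<Rightarrow> ('x \<Rightarrow> 'x) \<Rightarrow> ('x \<Rightarrow> 'x) \<Rightarrow> (nat \<Rightarrow> 'x \<Rightarrow> 'x)
   \<Rightarrow> ('x \<Rightarrow> nat) \<Rightarrow> ('x \<Rightarrow> nat set) \<Rightarrow> 'x \<Rightarrow> nat \<Rightarrow> ereal" where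
  "flow_payoff la mu c r nn alpha xi rho pos \<sigma> x i =
     ereal r * enn2ereal (lfp (served_op la mu nn alpha xi rho pos \<sigma>) x i)
   - ereal c * enn2ereal (lfp (time_op la mu nn alpha xi rho pos \<sigma>) x i)"

(* payoff of customer at position i of state x (just reached) if she stays while
   the others follow sigma x *)
definition stay_payoff ::
  "real \<Rightarrow> real \<Rightarrow> real \<Rightarrow> real \<Rightarrow> ('x \<Rightarrow> nat) \<Rightarrow> ('x \<Rightarrow> 'x) \<Rightarrow> ('x \<Rightarrow> 'x) \<Rightarrow> (nat \<Rightarrow> 'x \<Rightarrow> 'x)
   \<Rightarrow> ('x \<Rightarrow> nat) \<Rightarrow> ('x \<Rightarrow> nat set) \<Rightarrow> 'x \<Rightarrow> nat \<Rightarrow> ereal" where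
  "stay_payoff la mu c r nn alpha xi rho pos \<sigma> x i =
     (let S = \<sigma> x - {i} in
      if S = {} then flow_payoff la mu c r nn alpha xi rho pos \<sigma> x i
      else (case resolve nn \<sigma> rho (rho_set rho S x) (new_pos S i) of
              Flow y j \<Rightarrow> flow_payoff la mu c r nn alpha xi rho pos \<sigma> y j
            | Gone \<Rightarrow> 0))"

(* Markov perfect equilibrium: at every state, sigma x is a Nash equilibrium of the
   stay/renege game (reneging yields 0) *)
definition markov_perfect_eq ::
  "real \<Rightarrow> real \<Rightarrow> real \<Rightarrow> real \<Rightarrow> ('x \<Rightarrow> nat) \<Rightarrow> ('x \<Rightarrow> 'x) \<Rightarrow> ('x \<Rightarrow> 'x) \<Rightarrow> (nat \<Rightarrow> 'x \<Rightarrow> 'x)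
   \<Rightarrow> ('x \<Rightarrow> nat) \<Rightarrow> ('x \<Rightarrow> nat set) \<Rightarrow> bool" where
  "markov_perfect_eq la mu c r nn alpha xi rho pos \<sigma> \<longleftrightarrow>
     markov_strategy nn \<sigma> \<and>
     (\<forall>x. \<forall>i \<in> {1..nn x}.
        (i \<in> \<sigma> x \<longrightarrow> stay_payoff la mu c r nn alpha xi rho pos \<sigma> x i \<le> 0) \<and>
        (i \<notin> \<sigma> x \<longrightarrow> stay_payoff la mu c r nn alpha xi rho pos \<sigma> x i \<ge> 0))"

(* long-run average welfare of keeping at most N customers (M/M/1/N) *)
definition welfare :: "real \<Rightarrow> real \<Rightarrow> real \<Rightarrow> real \<Rightarrow> nat \<Rightarrow> real" where
  "welfare la mu c r N =
     (let q = la / mu in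
      (r * mu * (\<Sum>k=1..N. q ^ k) - c * (\<Sum>k=0..N. real k * q ^ k)) / (\<Sum>k=0..N. q ^ k))"

definition n_star :: "real \<Rightarrow> real \<Rightarrow> real \<Rightarrow> real \<Rightarrow> nat" where
  "n_star la mu c r = (LEAST N. \<forall>M. welfare la mu c r M \<le> welfare la mu c r N)"

definition universally_optimal ::
  "('x \<Rightarrow> nat) \<Rightarrow> ('x \<Rightarrow> 'x) \<Rightarrow> ('x \<Rightarrow> 'x) \<Rightarrow> (nat \<Rightarrow> 'x \<Rightarrow> 'x) \<Rightarrow> ('x \<Rightarrow> nat) \<Rightarrow> bool" where
  "universally_optimal nn alpha xi rho pos \<longleftrightarrow>
     (\<forall>la mu c r. la > 0 \<and> mu > 0 \<and> c > 0 \<and> r > 0 \<longrightarrow>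
        (\<exists>\<sigma>. markov_perfect_eq la mu c r nn alpha xi rho pos \<sigma> \<and>
             (\<forall>x. 1 \<le> nn x \<longrightarrow> card (\<sigma> x) = nn x - n_star la mu c r)))"

end

theory Submission
  imports Defs
begin

text \<open>
  Suppose no arrival is ever placed at the head of the queue, and take \<open>\<lambda> = \<mu> = c = 1\<close>,
  \<open>r = 3\<close>, for which \<open>n\<^sup>* = 1\<close>. A customer at the head then stays there until she is
  served or leaves, and her expected sojourn time is at most her probability of service
  divided by \<open>\<mu>\<close>; since \<open>c < r \<mu>\<close> her payoff is positive, so in an equilibrium she never
  reneges. An equilibrium inducing \<open>n\<^sup>* = 1\<close> must therefore let everybody except the head
  renege at every state. But then the second customer of a two-customer state is lost at the
  next arrival and becomes the head at the next service; she is served with probability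
  \<open>a / 2\<close>, where \<open>a \<ge> 3/4\<close> is the service probability of a head customer, within expected
  time \<open>(1 + b) / 2\<close> with \<open>b \<le> a\<close>, so her payoff \<open>3a/2 - (1 + b)/2 \<ge> a - 1/2\<close> is positive
  and she would rather stay.
\<close>

lemma rho_set_Min:
  assumes "finite S" "S \<noteq> {}"
  shows "rho_set rho S x = rho (Min S) (rho_set rho (S - {Min S}) x)"
  using assms unfolding rho_set_def by (simp add: sorted_list_of_set_nonempty[of S])

lemma new_pos_1:
  assumes "0 \<notin> S"
  shows "new_pos S 1 = 1"
proof -
  have "{k \<in> S. k < 1} = {}" using assms by auto
  then show ?thesis unfolding new_pos_def by (simp only: card.empty diff_zero)
qed

locale regime =
  fixes nn :: "'x \<Rightarrow> nat" and alpha xi :: "'x \<Rightarrow> 'x" and rho :: "nat \<Rightarrow> 'x \<Rightarrow> 'x"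
    and pos :: "'x \<Rightarrow> nat"
  assumes regime: "queuing_regime nn alpha xi rho pos"
begin

lemma idle_state_exists: "\<exists>x. nn x = 0"
  using regime unfolding queuing_regime_def by blast

lemma nn_alpha [simp]: "nn (alpha x) = Suc (nn x)"
  and pos_ge_1: "1 \<le> pos x"
  and pos_le_Suc_nn: "pos x \<le> Suc (nn x)"
  using regime unfolding queuing_regime_def by auto

lemma nn_xi: "1 \<le> nn x \<Longrightarrow> nn (xi x) = nn x - 1"
  using regime unfolding queuing_regime_def by auto

lemma nn_rho: "1 \<le> i \<Longrightarrow> i \<le> nn x \<Longrightarrow> nn (rho i x) = nn x - 1"
  using regime unfolding queuing_regime_def by auto

lemma nn_rho_set: "S \<subseteq> {1..nn x} \<Longrightarrow> nn (rho_set rho S x) = nn x - card S"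
proof (induction "card S" arbitrary: S)
  case 0
  moreover have "finite S" using "0.prems" by (rule finite_subset) simp
  ultimately have "S = {}" by simp
  then show ?case by (simp add: rho_set_def)
next
  case (Suc n)
  have fin: "finite S" using Suc.prems by (rule finite_subset) simp
  then have ne: "S \<noteq> {}" using Suc.hyps(2) by auto
  define m where "m = Min S"
  have m: "m \<in> S" "\<And>k. k \<in> S \<Longrightarrow> m \<le> k" using fin ne by (simp_all add: m_def)
  have IH: "nn (rho_set rho (S - {m}) x) = nn x - n"
    using Suc m by (subst Suc.hyps(1)) auto
  have "S \<subseteq> {m..nn x}" using Suc.prems m by auto
  then have "Suc n \<le> Suc (nn x) - m" using Suc.hyps(2) card_mono[of "{m..nn x}" S] by simp
  moreover have "1 \<le> m" using m Suc.prems by auto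
  ultimately have "nn (rho m (rho_set rho (S - {m}) x)) = nn x - Suc n"
    using IH by (subst nn_rho) auto
  moreover have "rho_set rho S x = rho m (rho_set rho (S - {m}) x)"
    unfolding m_def using fin ne by (rule rho_set_Min)
  ultimately show ?case using Suc.hyps(2) by simp
qed

lemma rho_set_keeps_head:
  assumes "S \<subseteq> {2..nn x}" "S \<noteq> {}"
  shows "1 \<le> nn (rho_set rho S x)" "nn (rho_set rho S x) < nn x"
proof -
  have "card S \<le> nn x - 1" using card_mono[OF _ assms(1)] by simp
  moreover have "0 < card S" using assms finite_subset[OF assms(1)] by (simp add: card_gt_0_iff)
  moreover have "nn (rho_set rho S x) = nn x - card S" using assms(1) by (intro nn_rho_set) auto
  ultimately show "1 \<le> nn (rho_set rho S x)" "nn (rho_set rho S x) < nn x" by linarith+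
qed

end

locale markov_regime = regime +
  fixes \<sigma> :: "'x \<Rightarrow> nat set"
  assumes markov: "markov_strategy nn \<sigma>"
begin

lemma strategy_range: "\<sigma> x \<subseteq> {1..nn x}"
  using markov unfolding markov_strategy_def by blast

lemma strategy_range_without_head: "\<sigma> x - {1} \<subseteq> {2..nn x}"
proof
  fix k assume "k \<in> \<sigma> x - {1}"
  then have "k \<in> {1..nn x}" "k \<noteq> 1" using strategy_range[of x] by auto
  then show "k \<in> {2..nn x}" by simp
qed

lemma reneging_step_keeps_head:
  assumes "1 \<notin> \<sigma> z" "\<sigma> z \<noteq> {}"
  shows "1 \<le> nn (rho_set rho (\<sigma> z) z)" "nn (rho_set rho (\<sigma> z) z) < nn z"
    and "new_pos (\<sigma> z) 1 = 1"
proof -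
  have "\<sigma> z \<subseteq> {2..nn z}" using strategy_range_without_head[of z] assms(1) by simp
  then show "1 \<le> nn (rho_set rho (\<sigma> z) z)" "nn (rho_set rho (\<sigma> z) z) < nn z"
    using assms(2) by (rule rho_set_keeps_head)+
  show "new_pos (\<sigma> z) 1 = 1" using strategy_range[of z] by (intro new_pos_1) auto
qed

lemma resolve_fuel_head_cases:
  "1 \<le> nn z \<Longrightarrow>
    resolve_fuel f \<sigma> rho z 1 = Gone \<or> (\<exists>w. resolve_fuel f \<sigma> rho z 1 = Flow w 1 \<and> 1 \<le> nn w)"
proof (induction f arbitrary: z)
  case (Suc f)
  then show ?case using reneging_step_keeps_head[of z] Suc.IH[of "rho_set rho (\<sigma> z) z"] by auto
qed simp

lemma resolve_fuel_head_Flow: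
  assumes "\<And>z'. 1 \<le> nn z' \<Longrightarrow> nn z' \<le> nn z \<Longrightarrow> 1 \<notin> \<sigma> z'"
    and "1 \<le> nn z" "nn z < f"
  shows "\<exists>w. resolve_fuel f \<sigma> rho z 1 = Flow w 1 \<and> 1 \<le> nn w"
  using assms
proof (induction f arbitrary: z)
  case (Suc f)
  show ?case
  proof (cases "\<sigma> z = {}")
    case False
    let ?z' = "rho_set rho (\<sigma> z) z"
    have "1 \<notin> \<sigma> z" using Suc.prems by simp
    note step = reneging_step_keeps_head[OF this False]
    have "\<exists>w. resolve_fuel f \<sigma> rho ?z' 1 = Flow w 1 \<and> 1 \<le> nn w"
      using step Suc.prems by (intro Suc.IH) auto
    then show ?thesis using step \<open>1 \<notin> \<sigma> z\<close> by simp
  qed (use Suc.prems in simp)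
qed simp

end

lemma ennreal_affine:
  "0 \<le> q \<Longrightarrow> 0 \<le> p \<Longrightarrow> 0 \<le> a \<Longrightarrow> ennreal q + ennreal p * ennreal a = ennreal (q + p * a)"
  by (simp add: ennreal_mult ennreal_plus)

lemma cval_mono: "f \<le> g \<Longrightarrow> cval f c \<le> cval g c"
  unfolding cval_def by (cases c) (auto simp: le_fun_def)

lemma mono_served_op: "mono (served_op la mu nn alpha xi rho pos \<sigma>)"
  unfolding served_op_def
  by (intro monoI le_funI add_mono mult_left_mono) (auto intro: cval_mono)

lemma mono_time_op: "mono (time_op la mu nn alpha xi rho pos \<sigma>)"
  unfolding time_op_def
  by (intro monoI le_funI add_mono mult_left_mono order_refl) (auto intro: cval_mono)

locale nonpreemptive_game = markov_regime +
  fixes la mu :: real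
  assumes no_preemption: "1 \<le> nn x \<Longrightarrow> pos x \<noteq> 1"
    and la_pos: "0 < la" and mu_pos: "0 < mu"
begin

abbreviation served where
  "served \<equiv> lfp (served_op la mu nn alpha xi rho pos \<sigma>)"

abbreviation sojourn where
  "sojourn \<equiv> lfp (time_op la mu nn alpha xi rho pos \<sigma>)"

lemma served_unfold:
  "served x i =
     ennreal (la / (la + mu)) * cval served (resolve nn \<sigma> rho (alpha x) (pos_after_arrival pos x i))
   + ennreal (mu / (la + mu)) * (if i = 1 then 1 else cval served (resolve nn \<sigma> rho (xi x) (i - 1)))"
  by (subst lfp_unfold[OF mono_served_op]) (simp add: served_op_def)

lemma sojourn_unfold:
  "sojourn x i = ennreal (1 / (la + mu))
   + ennreal (la / (la + mu)) * cval sojourn (resolve nn \<sigma> rho (alpha x) (pos_after_arrival pos x i))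
   + ennreal (mu / (la + mu)) * (if i = 1 then 0 else cval sojourn (resolve nn \<sigma> rho (xi x) (i - 1)))"
  by (subst lfp_unfold[OF mono_time_op]) (simp add: time_op_def)

lemma transition_probabilities_sum: "ennreal (la / (la + mu)) + ennreal (mu / (la + mu)) = 1"
  using la_pos mu_pos by (simp add: ennreal_plus[symmetric] add_divide_distrib[symmetric])

lemma served_le_1: "served x i \<le> 1"
proof -
  have "served_op la mu nn alpha xi rho pos \<sigma> (\<lambda>_ _. 1) \<le> (\<lambda>_ _. 1)"
  proof (intro le_funI)
    fix x i
    have "cval (\<lambda>_ _. 1) c \<le> 1" for c unfolding cval_def by (cases c) auto
    then have "served_op la mu nn alpha xi rho pos \<sigma> (\<lambda>_ _. 1) x i
        \<le> ennreal (la / (la + mu)) * 1 + ennreal (mu / (la + mu)) * 1"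
      unfolding served_op_def by (intro add_mono mult_left_mono) auto
    then show "served_op la mu nn alpha xi rho pos \<sigma> (\<lambda>_ _. 1) x i \<le> 1"
      by (simp add: transition_probabilities_sum)
  qed
  then show ?thesis using lfp_lowerbound by (metis le_funE)
qed

lemma served_head_ge: "ennreal (mu / (la + mu)) \<le> served x 1"
  by (subst served_unfold) simp

lemma pos_after_arrival_head: "1 \<le> nn x \<Longrightarrow> pos_after_arrival pos x 1 = 1"
  using no_preemption[of x] pos_ge_1[of x] unfolding pos_after_arrival_def by auto

lemma sojourn_head_le:
  assumes "1 \<le> nn x"
  shows "sojourn x 1 \<le> ennreal (1 / mu) * served x 1"
proof -
  \<comment> \<open>At the head, the sojourn recursion is the served recursion scaled by \<open>1 / mu\<close>.\<close>
  define g where "g y (i::nat) = (if i = 1 \<and> 1 \<le> nn y then ennreal (1 / mu) * served y 1 else top)" for y i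
  have "time_op la mu nn alpha xi rho pos \<sigma> g y i \<le> g y i" for y i
  proof (cases "i = 1 \<and> 1 \<le> nn y")
    case True
    define R where "R = resolve nn \<sigma> rho (alpha y) 1"
    have "R = Gone \<or> (\<exists>w. R = Flow w 1 \<and> 1 \<le> nn w)"
      unfolding R_def resolve_def by (rule resolve_fuel_head_cases) simp
    then have "cval g R = ennreal (1 / mu) * cval served R"
      by (auto simp: cval_def g_def)
    moreover have "ennreal (1 / mu) * ennreal (mu / (la + mu)) = ennreal (1 / (la + mu))"
      using la_pos mu_pos by (simp add: ennreal_mult[symmetric])
    ultimately have "time_op la mu nn alpha xi rho pos \<sigma> g y 1 = ennreal (1 / mu) * served y 1"
      using True pos_after_arrival_head[of y]
      by (subst served_unfold) (simp add: time_op_def R_def distrib_left ac_simps)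
    then show ?thesis using True by (simp add: g_def)
  next
    case False
    then have "g y i = top" unfolding g_def by (rule if_not_P)
    then show ?thesis by simp
  qed
  then have "sojourn \<le> g" by (intro lfp_lowerbound le_funI)
  then have "sojourn x 1 \<le> g x 1" by (rule le_funD[OF le_funD])
  then show ?thesis using assms unfolding g_def by simp
qed

lemma head_values_real:
  assumes "1 \<le> nn x"
  obtains a b where "served x 1 = ennreal a" "sojourn x 1 = ennreal b"
    and "mu / (la + mu) \<le> a" "0 \<le> b" "b \<le> a / mu"
proof -
  define a where "a = enn2real (served x 1)"
  have "served x 1 < top" using served_le_1 ennreal_one_less_top by (rule le_less_trans)
  then have sa: "served x 1 = ennreal a" unfolding a_def by simp
  have "0 \<le> a" unfolding a_def by simp
  have "ennreal (1 / mu) * ennreal a = ennreal (a / mu)"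
    using mu_pos \<open>0 \<le> a\<close> by (subst ennreal_mult[symmetric]) auto
  then have le: "sojourn x 1 \<le> ennreal (a / mu)"
    using sojourn_head_le[OF assms] sa by simp
  define b where "b = enn2real (sojourn x 1)"
  have "sojourn x 1 < top" using le ennreal_less_top by (rule le_less_trans)
  then have "sojourn x 1 = ennreal b" "0 \<le> b" "b \<le> a / mu"
    using enn2real_mono[OF le] mu_pos \<open>0 \<le> a\<close> unfolding b_def by auto
  moreover have "mu / (la + mu) \<le> a"
    using served_head_ge[of x] \<open>0 \<le> a\<close> unfolding sa by simp
  ultimately show thesis using that sa by blast
qed

abbreviation flow where "flow c r \<equiv> flow_payoff la mu c r nn alpha xi rho pos \<sigma>"

abbreviation stay where "stay c r \<equiv> stay_payoff la mu c r nn alpha xi rho pos \<sigma>"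

lemma flow_payoff_ennreal:
  "served x i = ennreal a \<Longrightarrow> sojourn x i = ennreal b \<Longrightarrow> 0 \<le> a \<Longrightarrow> 0 \<le> b \<Longrightarrow>
    flow c r x i = ereal (r * a - c * b)"
  unfolding flow_payoff_def by simp

lemma head_flow_payoff_pos:
  assumes "0 \<le> c" "c < r * mu" "1 \<le> nn x"
  shows "0 < flow c r x 1"
proof -
  obtain a b where ab: "served x 1 = ennreal a" "sojourn x 1 = ennreal b"
    and "mu / (la + mu) \<le> a" "0 \<le> b" "b \<le> a / mu"
    using head_values_real[OF assms(3)] .
  have "0 < mu / (la + mu)" using la_pos mu_pos by simp
  with \<open>mu / (la + mu) \<le> a\<close> have "0 < a" by linarith
  have "c * b \<le> c * (a / mu)" using \<open>b \<le> a / mu\<close> assms(1) by (rule mult_left_mono)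
  also have "\<dots> < r * a" using assms(2) \<open>0 < a\<close> mu_pos by (simp add: field_simps)
  finally show ?thesis using ab \<open>0 < a\<close> \<open>0 \<le> b\<close> by (simp add: flow_payoff_ennreal)
qed

lemma equilibrium_reneging_payoff:
  assumes "markov_perfect_eq la mu c r nn alpha xi rho pos \<sigma>" "i \<in> \<sigma> x"
  shows "stay c r x i \<le> 0"
  using assms strategy_range[of x] unfolding markov_perfect_eq_def by blast

lemma head_never_reneges:
  assumes eq: "markov_perfect_eq la mu c r nn alpha xi rho pos \<sigma>" and "0 \<le> c" "c < r * mu"
  shows "1 \<le> nn x \<Longrightarrow> 1 \<notin> \<sigma> x"
proof (induction "nn x" arbitrary: x rule: less_induct)
  case less
  show ?case
  proof
    assume "1 \<in> \<sigma> x"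
    with eq have "stay c r x 1 \<le> 0" by (rule equilibrium_reneging_payoff)
    moreover have "0 < stay c r x 1"
    proof (cases "\<sigma> x - {1} = {}")
      case True
      then show ?thesis
        using head_flow_payoff_pos[OF assms(2,3) less.prems] by (simp add: stay_payoff_def)
    next
      case False
      define z where "z = rho_set rho (\<sigma> x - {1}) x"
      have z: "1 \<le> nn z" "nn z < nn x"
        unfolding z_def using strategy_range_without_head False by (rule rho_set_keeps_head)+
      have "\<exists>w. resolve nn \<sigma> rho z 1 = Flow w 1 \<and> 1 \<le> nn w"
        unfolding resolve_def using less.hyps z by (intro resolve_fuel_head_Flow) auto
      then obtain w where w: "resolve nn \<sigma> rho z 1 = Flow w 1" "1 \<le> nn w" by blast
      have "new_pos (\<sigma> x - {1}) 1 = 1" using strategy_range[of x] by (intro new_pos_1) auto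
      then have "stay c r x 1 = flow c r w 1"
        using False w unfolding stay_payoff_def Let_def z_def by simp
      then show ?thesis using head_flow_payoff_pos[OF assms(2,3) w(2)] by simp
    qed
    ultimately show False by simp
  qed
qed

lemma equilibrium_resolve_head:
  assumes "markov_perfect_eq la mu c r nn alpha xi rho pos \<sigma>" "0 \<le> c" "c < r * mu"
    and "1 \<le> nn z"
  shows "\<exists>w. resolve nn \<sigma> rho z 1 = Flow w 1 \<and> 1 \<le> nn w"
  unfolding resolve_def using head_never_reneges[OF assms(1-3)] assms(4)
  by (intro resolve_fuel_head_Flow) auto

lemma equilibrium_reneging_set:
  assumes "markov_perfect_eq la mu c r nn alpha xi rho pos \<sigma>" "0 \<le> c" "c < r * mu"
    and "card (\<sigma> x) = nn x - 1" "1 \<le> nn x"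
  shows "\<sigma> x = {2..nn x}"
proof -
  have "\<sigma> x \<subseteq> {2..nn x}"
    using strategy_range_without_head[of x] head_never_reneges[OF assms(1-3,5)] by simp
  moreover have "card (\<sigma> x) = card {2..nn x}" using assms(4) by simp
  ultimately show ?thesis by (intro card_subset_eq) auto
qed

end

lemma welfare_unit_rates:
  "welfare 1 1 1 3 N = (3 * real N - real N * (real N + 1) / 2) / (real N + 1)"
proof -
  have "(\<Sum>k = 0..N. real k) = real N * (real N + 1) / 2"
    using double_gauss_sum[of N, where ?'a = real] by simp
  then show ?thesis unfolding welfare_def Let_def by (simp add: add.commute)
qed

lemma n_star_unit_rates: "n_star 1 1 1 3 = 1"
  unfolding n_star_def
proof (rule Least_equality)
  have welfare_1: "welfare 1 1 1 3 1 = 1" by (simp add: welfare_unit_rates)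
  show "\<forall>M. welfare 1 1 1 3 M \<le> welfare 1 1 1 3 1"
  proof
    fix M
    have "0 \<le> (real M - 1) * (real M - 2)"
      by (cases "M \<le> 1") (auto simp: le_Suc_eq intro: mult_nonneg_nonneg)
    then have "welfare 1 1 1 3 M \<le> 1"
      unfolding welfare_unit_rates by (simp add: divide_le_eq field_simps; linarith)
    then show "welfare 1 1 1 3 M \<le> welfare 1 1 1 3 1" using welfare_1 by simp
  qed
  show "1 \<le> N" if "\<forall>M. welfare 1 1 1 3 M \<le> welfare 1 1 1 3 N" for N
    using that[rule_format, of 1] welfare_1 by (cases N) (simp_all add: welfare_unit_rates)
qed

locale unit_rate_equilibrium = nonpreemptive_game nn alpha xi rho pos \<sigma> 1 1
  for nn alpha xi rho pos \<sigma> +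
  assumes equilibrium: "markov_perfect_eq 1 1 1 3 nn alpha xi rho pos \<sigma>"
    and optimal_reneging_count: "\<And>x. 1 \<le> nn x \<Longrightarrow> card (\<sigma> x) = nn x - 1"
begin

lemma reneging_all_but_head: "1 \<le> nn x \<Longrightarrow> \<sigma> x = {2..nn x}"
  using equilibrium_reneging_set[OF equilibrium] optimal_reneging_count by simp

lemma resolve_head: "1 \<le> nn z \<Longrightarrow> \<exists>w. resolve nn \<sigma> rho z 1 = Flow w 1 \<and> 1 \<le> nn w"
  using equilibrium_resolve_head[OF equilibrium] by simp

lemma served_head_ge_three_quarters:
  assumes "1 \<le> nn w" "served w 1 = ennreal a" "0 \<le> a"
  shows "3 / 4 \<le> a"
proof -
  obtain w' where w': "resolve nn \<sigma> rho (alpha w) 1 = Flow w' 1" "1 \<le> nn w'"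
    using resolve_head[of "alpha w"] by auto
  obtain a' where a': "served w' 1 = ennreal a'" "1 / 2 \<le> a'"
    using head_values_real[OF w'(2)] by auto
  have "ennreal a = ennreal (1 / 2) + ennreal (1 / 2) * ennreal a'"
    using served_unfold[of w 1] w'(1) pos_after_arrival_head[OF assms(1)] assms(2) a'(1)
    by (simp add: cval_def add.commute)
  also have "\<dots> = ennreal (1 / 2 + 1 / 2 * a')" using a'(2) by (intro ennreal_affine) auto
  finally have "a = 1 / 2 + 1 / 2 * a'"
    using assms(3) a'(2) by (subst (asm) ennreal_inj) auto
  then show ?thesis using a'(2) by simp
qed

lemma second_customer_flow_payoff_pos:
  assumes "nn y = 2"
  shows "0 < flow 1 3 y 2"
proof -
  have "pos_after_arrival pos y 2 \<in> \<sigma> (alpha y)"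
    using reneging_all_but_head[of "alpha y"] no_preemption[of y] pos_ge_1[of y] pos_le_Suc_nn[of y]
      assms
    unfolding pos_after_arrival_def by auto
  then have arrival: "resolve nn \<sigma> rho (alpha y) (pos_after_arrival pos y 2) = Gone"
    unfolding resolve_def by simp
  obtain w where service: "resolve nn \<sigma> rho (xi y) 1 = Flow w 1" and "1 \<le> nn w"
    using resolve_head[of "xi y"] nn_xi[of y] assms by auto
  obtain a b where ab: "served w 1 = ennreal a" "sojourn w 1 = ennreal b"
    and "1 / (1 + 1) \<le> a" "0 \<le> b" "b \<le> a / 1"
    by (rule head_values_real[OF \<open>1 \<le> nn w\<close>])
  then have "b \<le> a" "3 / 4 \<le> a"
    using served_head_ge_three_quarters[OF \<open>1 \<le> nn w\<close> ab(1)] by simp_all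
  have "served y 2 = ennreal (1 / 2) * ennreal a"
    using served_unfold[of y 2] arrival service ab(1) by (simp add: cval_def)
  also have "\<dots> = ennreal (1 / 2 * a)"
    using \<open>3 / 4 \<le> a\<close> by (intro ennreal_mult[symmetric]) auto
  finally have served_y: "served y 2 = ennreal (1 / 2 * a)" .
  have "sojourn y 2 = ennreal (1 / 2) + ennreal (1 / 2) * ennreal b"
    using sojourn_unfold[of y 2] arrival service ab(2) by (simp add: cval_def)
  also have "\<dots> = ennreal (1 / 2 + 1 / 2 * b)" using \<open>0 \<le> b\<close> by (intro ennreal_affine) auto
  finally have "flow 1 3 y 2 = ereal (3 * (1 / 2 * a) - 1 * (1 / 2 + 1 / 2 * b))"
    using served_y \<open>0 \<le> b\<close> \<open>3 / 4 \<le> a\<close> by (intro flow_payoff_ennreal) auto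
  then show ?thesis using \<open>3 / 4 \<le> a\<close> \<open>b \<le> a\<close> by simp
qed

end

lemma no_optimal_equilibrium_without_preemption:
  assumes "queuing_regime nn alpha xi rho pos"
    and "\<And>x. 1 \<le> nn x \<Longrightarrow> pos x \<noteq> 1"
    and eq: "markov_perfect_eq 1 1 1 3 nn alpha xi rho pos \<sigma>"
    and "\<And>x. 1 \<le> nn x \<Longrightarrow> card (\<sigma> x) = nn x - 1"
  shows False
proof -
  have "markov_strategy nn \<sigma>" using eq unfolding markov_perfect_eq_def by blast
  then interpret unit_rate_equilibrium nn alpha xi rho pos \<sigma>
    using assms by unfold_locales (auto simp: regime_def markov_regime_axioms_def)
  obtain x0 where "nn x0 = 0" using idle_state_exists by blast
  define y where "y = alpha (alpha x0)"
  have "nn y = 2" unfolding y_def using \<open>nn x0 = 0\<close> by simp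
  then have "\<sigma> y = {2}" using reneging_all_but_head[of y] by simp
  then have "stay 1 3 y 2 = flow 1 3 y 2" and "stay 1 3 y 2 \<le> 0"
    using equilibrium_reneging_payoff[OF eq, of 2 y] by (simp_all add: stay_payoff_def)
  then show False using second_customer_flow_payoff_pos[OF \<open>nn y = 2\<close>] by simp
qed

theorem corollary1:
  fixes nn :: "'x \<Rightarrow> nat" and alpha xi :: "'x \<Rightarrow> 'x" and rho :: "nat \<Rightarrow> 'x \<Rightarrow> 'x"
    and pos :: "'x \<Rightarrow> nat"
  assumes "queuing_regime nn alpha xi rho pos"
    and "universally_optimal nn alpha xi rho pos"
  shows "\<exists>x. 1 \<le> nn x \<and> pos x = 1"
proof (rule ccontr)
  assume "\<not> (\<exists>x. 1 \<le> nn x \<and> pos x = 1)"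
  then have no_preemption: "\<And>x. 1 \<le> nn x \<Longrightarrow> pos x \<noteq> 1" by blast
  obtain \<sigma> where eq: "markov_perfect_eq 1 1 1 3 nn alpha xi rho pos \<sigma>"
    and card: "\<And>x. 1 \<le> nn x \<Longrightarrow> card (\<sigma> x) = nn x - n_star 1 1 1 3"
    using assms(2) unfolding universally_optimal_def by force
  show False
    by (rule no_optimal_equilibrium_without_preemption[OF assms(1) no_preemption eq])
      (use card n_star_unit_rates in auto)
qed

end
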